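(* Let $(y_1,u_1)$ and $(y_2,u_2)$ be the solutions on $[0,\pi]$ of the homogeneous system $$y' = Qy + u,\qquad u' = (C-Q^2)y - Qu$$ which satisfy the initial conditions $y_1(0)=1,\ u_1(0)=0$ and $y_2(0)=0,\ u_2(0)=1$. If $y_2(\pi)\neq 0$, then the non-homogeneous system $$y' = Qy + u,\qquad u' = (C-Q^2)y - Qu + f$$ has, for each $f\in L^2([0,\pi])$, a unique solution $(y,u)=(R_1(f),R_2(f))$ such that $y(0)=0$ and $y(\pi)=0$. Moreover, $R_1$ is a linear continuous operator from $L^2([0,\pi])$ into $H^1([0,\pi])$, and $R_2$ is a linear continuous operator in $L^2([0,\pi])$ with range in $W^1_1([0,\pi])$.
   Context: Here $v = C + Q'$ is a $\pi$-periodic potential in $H^{-1}_{loc}(\mathbb{R})$, where $C$ is a constant and $Q\in L^2_{loc}(\mathbb{R})$ is $\pi$-periodic with $\frac{1}{\pi}\int_0^\pi Q(x)\,dx = 0$. The non-homogeneous system arises from rewriting $-(y'-Qy)' - Qy' + Cy = f$ using the quasi-derivative $u = y' - Qy$; its coefficients are in $L^1$, so solutions $(y,u)$ with $y,u\in W^1_1([0,\pi])$ exist and are unique for given initial data. $H^1([0,\pi])$ is the Sobolev space of absolutely continuous functions with derivative in $L^2([0,\pi])$. *)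

theory Defs
  imports "HOL-Analysis.Analysis"
begin

definition L2_on :: "real set \<Rightarrow> (real \<Rightarrow> complex) \<Rightarrow> bool" where
  "L2_on S h \<longleftrightarrow> set_borel_measurable lborel S h \<and>
     set_integrable lborel S (\<lambda>t. (cmod (h t))^2)"

definition L2_norm :: "real set \<Rightarrow> (real \<Rightarrow> complex) \<Rightarrow> real" where
  "L2_norm S h = sqrt (set_lebesgue_integral lborel S (\<lambda>t. (cmod (h t))^2))"

definition L2_loc :: "(real \<Rightarrow> complex) \<Rightarrow> bool" where
  "L2_loc h \<longleftrightarrow> h \<in> borel_measurable lborel \<and> (\<forall>a b. L2_on {a..b} h)"

text \<open>W^1_1([0,pi]): y is the indefinite integral of an L^1 function (absolute continuity).\<close>
definition W11 :: "(real \<Rightarrow> complex) \<Rightarrow> bool" where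
  "W11 y \<longleftrightarrow> (\<exists>g. set_integrable lborel {0..pi} g \<and>
     (\<forall>x\<in>{0..pi}. y x = y 0 + set_lebesgue_integral lborel {0..x} g))"

definition has_weak_deriv :: "(real \<Rightarrow> complex) \<Rightarrow> (real \<Rightarrow> complex) \<Rightarrow> bool" where
  "has_weak_deriv y g \<longleftrightarrow> set_integrable lborel {0..pi} g \<and>
     (\<forall>x\<in>{0..pi}. y x = y 0 + set_lebesgue_integral lborel {0..x} g)"

definition H1 :: "(real \<Rightarrow> complex) \<Rightarrow> bool" where
  "H1 y \<longleftrightarrow> (\<exists>g. L2_on {0..pi} g \<and> has_weak_deriv y g)"

definition sol_sys :: "complex \<Rightarrow> (real \<Rightarrow> complex) \<Rightarrow> (real \<Rightarrow> complex)
    \<Rightarrow> (real \<Rightarrow> complex) \<Rightarrow> (real \<Rightarrow> complex) \<Rightarrow> bool" where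
  "sol_sys C Q f y u \<longleftrightarrow>
     has_weak_deriv y (\<lambda>t. Q t * y t + u t) \<and>
     has_weak_deriv u (\<lambda>t. (C - (Q t)^2) * y t - Q t * u t + f t)"

end

theory Submission
  imports Defs
begin

text \<open>The Wronskian \<open>y\<^sub>1 u\<^sub>2 - y\<^sub>2 u\<^sub>1\<close> has weak derivative zero by the product rule for
  absolutely continuous functions, so it is identically 1. Variation of constants gives the
  solution \<open>y = y\<^sub>2 \<integral>\<^sub>0\<^sup>x y\<^sub>1 f - y\<^sub>1 \<integral>\<^sub>0\<^sup>x y\<^sub>2 f\<close> of the forced system with \<open>y(0) = 0\<close>;
  since \<open>y\<^sub>2(\<pi>) \<noteq> 0\<close>, subtracting a multiple of \<open>(y\<^sub>2, u\<^sub>2)\<close> also makes \<open>y(\<pi>) = 0\<close>.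
  The Wronskian also shows that a homogeneous solution with \<open>y(0) = 0\<close> is a multiple of
  \<open>(y\<^sub>2, u\<^sub>2)\<close>, whence uniqueness, and linearity follows from uniqueness. The solution is
  bounded pointwise by a multiple of \<open>\<integral>|f| \<le> \<surd>\<pi> \<parallel>f\<parallel>\<^sub>2\<close>, and the weak derivative
  \<open>Q y + u\<close> of \<open>y\<close> is then in \<open>L\<^sup>2\<close> because \<open>Q\<close> is.\<close>

abbreviation indef_int :: "(real \<Rightarrow> 'a::{banach, second_countable_topology}) \<Rightarrow> real \<Rightarrow> 'a" where
  "indef_int g x \<equiv> set_lebesgue_integral lborel {0..x} g"

lemma indef_int_0: "indef_int g 0 = 0"
proof -
  have "AE x in lborel. indicator {0..0::real} x *\<^sub>R g x = 0"
    using AE_lborel_singleton[of 0] by eventually_elim auto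
  then show ?thesis unfolding set_lebesgue_integral_def by (simp add: integral_eq_zero_AE)
qed

lemma indef_int_eq_integral:
  fixes g :: "real \<Rightarrow> 'a::euclidean_space"
  assumes "set_integrable lborel {0..b} g" "x \<le> b"
  shows "indef_int g x = integral {0..x} g"
  by (rule set_borel_integral_eq_integral(2), rule set_integrable_subset[OF assms(1)]) (use assms in auto)

lemma continuous_on_indef_int:
  fixes g :: "real \<Rightarrow> 'a::euclidean_space"
  assumes "set_integrable lborel {0..b} g"
  shows "continuous_on {0..b} (indef_int g)"
proof -
  have "continuous_on {0..b} (\<lambda>x. integral {0..x} g)"
    by (rule indefinite_integral_continuous_1, rule set_borel_integral_eq_integral(1)[OF assms])
  then show ?thesis
    by (rule continuous_on_eq) (use indef_int_eq_integral[OF assms] in auto)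
qed

lemma set_integral_combine_atLeastAtMost:
  fixes h :: "real \<Rightarrow> 'a::euclidean_space"
  assumes h: "set_integrable lborel {a..b} h" and s: "a \<le> s" "s \<le> b"
  shows "set_lebesgue_integral lborel {a..s} h + set_lebesgue_integral lborel {s..b} h
       = set_lebesgue_integral lborel {a..b} h"
proof -
  have "set_lebesgue_integral lborel {c..d} h = integral {c..d} h" if "a \<le> c" "d \<le> b" for c d
    by (rule set_borel_integral_eq_integral(2), rule set_integrable_subset[OF h]) (use that in auto)
  then show ?thesis
    using Henstock_Kurzweil_Integration.integral_combine[OF s set_borel_integral_eq_integral(1)[OF h]] s by simp
qed

lemma set_borel_measurable_mult:
  fixes F G :: "real \<Rightarrow> complex"
  assumes "set_borel_measurable lborel S F" "set_borel_measurable lborel S G"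
  shows "set_borel_measurable lborel S (\<lambda>t. F t * G t)"
proof -
  have "(\<lambda>x. (indicator S x *\<^sub>R F x) * (indicator S x *\<^sub>R G x)) \<in> borel_measurable lborel"
    using assms unfolding set_borel_measurable_def by measurable
  then show ?thesis
    unfolding set_borel_measurable_def by (rule measurable_cong[THEN iffD1, rotated]) (auto simp: indicator_def)
qed

lemma set_borel_measurable_add:
  fixes F G :: "real \<Rightarrow> complex"
  assumes "set_borel_measurable lborel S F" "set_borel_measurable lborel S G"
  shows "set_borel_measurable lborel S (\<lambda>t. F t + G t)"
  using assms unfolding set_borel_measurable_def by (simp add: scaleR_add_right)

lemma set_borel_measurable_continuous_on:
  fixes F :: "real \<Rightarrow> complex"
  assumes "continuous_on {a..b} F"
  shows "set_borel_measurable lborel {a..b} F"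
  using set_measurable_continuous_on[OF _ assms] by (simp add: set_borel_measurable_def)

lemma continuous_on_bounded_norm:
  fixes F :: "real \<Rightarrow> 'a::real_normed_vector"
  assumes "continuous_on {a..b} F"
  obtains M where "\<And>x. x \<in> {a..b} \<Longrightarrow> norm (F x) \<le> M"
  using compact_imp_bounded[OF compact_continuous_image[OF assms]] that by (force simp: bounded_iff)

lemma set_integrable_continuous_mult:
  fixes F g :: "real \<Rightarrow> complex"
  assumes F: "continuous_on {a..b} F" and g: "set_integrable lborel {a..b} g"
  shows "set_integrable lborel {a..b} (\<lambda>t. F t * g t)"
proof -
  obtain M where M: "\<And>x. x \<in> {a..b} \<Longrightarrow> norm (F x) \<le> M"
    using continuous_on_bounded_norm[OF F] by blast
  have "set_borel_measurable lborel {a..b} (\<lambda>t. F t * g t)"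
    using set_borel_measurable_continuous_on[OF F] g
    by (intro set_borel_measurable_mult) (auto simp: set_integrable_def set_borel_measurable_def)
  then show ?thesis
    by (rule set_integrable_bound[OF set_integrable_mult_right[OF g, of "of_real M"]])
       (auto intro!: AE_I2 mult_right_mono simp: norm_mult M abs_le_iff order_trans[OF norm_ge_zero M])
qed

lemma integrable_lborel_pair_upper_triangle:
  fixes G H :: "real \<Rightarrow> complex"
  assumes G: "integrable lborel G" and H: "integrable lborel H"
  shows "integrable (lborel \<Otimes>\<^sub>M lborel) (\<lambda>(s, t). G s * (indicator {s..} t *\<^sub>R H t))"
proof (rule lborel_pair.Fubini_integrable)
  have [measurable]: "G \<in> borel_measurable lborel" "H \<in> borel_measurable lborel"
    using G H by auto
  have "(\<lambda>(s, t). of_real (indicator {(s, t). s \<le> t} (s, t)) * (G s * H t))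
      \<in> borel_measurable (lborel \<Otimes>\<^sub>M lborel)"
    by measurable
  then show meas: "(\<lambda>(s, t). G s * (indicator {s..} t *\<^sub>R H t)) \<in> borel_measurable (lborel \<Otimes>\<^sub>M lborel)"
    by (rule measurable_cong[THEN iffD1, rotated]) (auto simp: indicator_def)
  have "(\<lambda>(s, t). norm (G s * (indicator {s..} t *\<^sub>R H t))) \<in> borel_measurable (lborel \<Otimes>\<^sub>M lborel)"
    using meas by measurable
  then have norm_meas: "(\<lambda>s. \<integral>t. norm (G s * (indicator {s..} t *\<^sub>R H t)) \<partial>lborel) \<in> borel_measurable lborel"
    by (rule lborel.borel_measurable_lebesgue_integral[OF measurable_cong[THEN iffD1, rotated]]) auto
  have HI: "integrable lborel (\<lambda>t. indicator {s..} t *\<^sub>R H t)" for s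
    by (rule integrable_mult_indicator) (auto simp: H)
  then show "AE s in lborel. integrable lborel (\<lambda>t. case (s, t) of (s, t) \<Rightarrow> G s * (indicator {s..} t *\<^sub>R H t))"
    by (intro AE_I2) (simp only: prod.case, rule integrable_mult_right[OF HI])
  have bound: "(\<integral>t. norm (G s * (indicator {s..} t *\<^sub>R H t)) \<partial>lborel) \<le> norm (G s) * (\<integral>t. norm (H t) \<partial>lborel)" for s
  proof -
    have "(\<integral>t. norm (G s * (indicator {s..} t *\<^sub>R H t)) \<partial>lborel) \<le> (\<integral>t. norm (G s) * norm (H t) \<partial>lborel)"
    proof (rule integral_mono)
      show "integrable lborel (\<lambda>t. norm (G s * (indicator {s..} t *\<^sub>R H t)))"
        by (intro integrable_norm integrable_mult_right HI)
    qed (use H in \<open>auto simp: norm_mult indicator_def\<close>)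
    then show ?thesis by simp
  qed
  have "integrable lborel (\<lambda>s. norm (G s) * (\<integral>t. norm (H t) \<partial>lborel))"
    using G by auto
  then show "integrable lborel (\<lambda>s. \<integral>t. norm (case (s, t) of (s, t) \<Rightarrow> G s * (indicator {s..} t *\<^sub>R H t)) \<partial>lborel)"
    unfolding prod.case by (rule Bochner_Integration.integrable_bound[OF _ norm_meas])
       (use bound in \<open>auto intro!: AE_I2 simp: abs_le_iff intro: order_trans[OF _ bound]\<close>)
qed

(* Fubini's theorem on the triangle 0 \<le> s \<le> t \<le> x. *)
lemma indef_int_mult:
  fixes g h :: "real \<Rightarrow> complex"
  assumes g: "set_integrable lborel {0..x} g" and h: "set_integrable lborel {0..x} h"
  shows "indef_int g x * indef_int h x
       = indef_int (\<lambda>s. g s * indef_int h s) x + indef_int (\<lambda>t. indef_int g t * h t) x"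
proof -
  define G where "G = (\<lambda>s. indicator {0..x} s *\<^sub>R g s)"
  define H where "H = (\<lambda>s. indicator {0..x} s *\<^sub>R h s)"
  define B where "B = (\<lambda>s t. G s * (indicator {s..} t *\<^sub>R H t))"
  have B_int: "integrable (lborel \<Otimes>\<^sub>M lborel) (\<lambda>(s, t). B s t)"
    unfolding B_def by (rule integrable_lborel_pair_upper_triangle)
      (use g h in \<open>simp_all add: G_def H_def set_integrable_def\<close>)
  have inner_s: "(\<integral>s. B s t \<partial>lborel) = indicator {0..x} t *\<^sub>R (indef_int g t * h t)" for t
  proof -
    have "(\<lambda>s. B s t) = (\<lambda>s. indicator {0..x} t *\<^sub>R ((indicator {0..t} s *\<^sub>R g s) * h t))"
      by (auto simp: B_def G_def H_def indicator_def)
    then show ?thesis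
      by (simp only: set_lebesgue_integral_def integral_scaleR_right integral_mult_left_zero)
  qed
  have inner_t: "(\<integral>t. B s t \<partial>lborel) = indicator {0..x} s *\<^sub>R (g s * set_lebesgue_integral lborel {s..x} h)" for s
  proof -
    have "(\<lambda>t. B s t) = (\<lambda>t. indicator {0..x} s *\<^sub>R (g s * (indicator {s..x} t *\<^sub>R h t)))"
      by (auto simp: B_def G_def H_def indicator_def)
    then show ?thesis
      by (simp only: set_lebesgue_integral_def integral_scaleR_right integral_mult_right_zero)
  qed
  have "indef_int (\<lambda>s. g s * indef_int h s) x + indef_int (\<lambda>t. indef_int g t * h t) x
     = (\<integral>s. indicator {0..x} s *\<^sub>R (g s * indef_int h s) \<partial>lborel) + (\<integral>s. (\<integral>t. B s t \<partial>lborel) \<partial>lborel)"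
    using lborel_pair.Fubini_integral[of B] B_int by (simp add: inner_s set_lebesgue_integral_def)
  also have "\<dots> = (\<integral>s. indicator {0..x} s *\<^sub>R (g s * indef_int h s) + (\<integral>t. B s t \<partial>lborel) \<partial>lborel)"
  proof (rule Bochner_Integration.integral_add[symmetric])
    show "integrable lborel (\<lambda>s. indicator {0..x} s *\<^sub>R (g s * indef_int h s))"
      using set_integrable_continuous_mult[OF continuous_on_indef_int[OF h] g]
      by (simp add: set_integrable_def mult.commute)
    show "integrable lborel (\<lambda>s. \<integral>t. B s t \<partial>lborel)"
      using lborel_pair.integrable_fst'[OF B_int] by simp
  qed
  also have "\<dots> = (\<integral>s. (indicator {0..x} s *\<^sub>R g s) * indef_int h x \<partial>lborel)"
    by (rule Bochner_Integration.integral_cong[OF refl])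
       (auto simp: inner_t indicator_def simp flip: distrib_left set_integral_combine_atLeastAtMost[OF h])
  also have "\<dots> = indef_int g x * indef_int h x"
    unfolding set_lebesgue_integral_def by (rule integral_mult_left_zero)
  finally show ?thesis by simp
qed

lemma norm_indef_int_mult_le:
  fixes F h :: "real \<Rightarrow> complex"
  assumes h: "set_integrable lborel {0..b} h" and F: "continuous_on {0..b} F"
    and M: "\<And>t. t \<in> {0..b} \<Longrightarrow> cmod (F t) \<le> M" and x: "x \<in> {0..b}"
  shows "cmod (indef_int (\<lambda>t. F t * h t) x) \<le> M * (LINT t:{0..b}|lborel. cmod (h t))"
proof -
  have on_x: "set_integrable lborel {0..x} f"
    if "set_integrable lborel {0..b} f" for f :: "real \<Rightarrow> 'a::{banach, second_countable_topology}"
    by (rule set_integrable_subset[OF that]) (use x in auto)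
  have Fh: "set_integrable lborel {0..x} (\<lambda>t. F t * h t)"
    by (rule on_x[OF set_integrable_continuous_mult[OF F h]])
  have norm_h: "set_integrable lborel {0..b} (\<lambda>t. cmod (h t))"
    using h by (simp add: set_integrable_norm)
  have "0 \<le> M"
    using M[of 0] x by (auto intro: order_trans[OF norm_ge_zero])
  have "cmod (indef_int (\<lambda>t. F t * h t) x) \<le> (LINT t:{0..x}|lborel. cmod (F t * h t))"
    by (rule set_integral_norm_bound[OF Fh])
  also have "\<dots> \<le> (LINT t:{0..x}|lborel. M * cmod (h t))"
  proof (rule set_integral_mono)
    show "set_integrable lborel {0..x} (\<lambda>t. cmod (F t * h t))"
      by (rule set_integrable_norm[OF Fh])
    show "set_integrable lborel {0..x} (\<lambda>t. M * cmod (h t))"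
      using on_x[OF norm_h] by simp
    show "cmod (F t * h t) \<le> M * cmod (h t)" if "t \<in> {0..x}" for t
      using M[of t] that x by (auto simp: norm_mult intro!: mult_right_mono)
  qed
  also have "\<dots> \<le> M * (LINT t:{0..b}|lborel. cmod (h t))"
  proof -
    have "0 \<le> (LINT t:{x..b}|lborel. cmod (h t))"
      unfolding set_lebesgue_integral_def by (rule Bochner_Integration.integral_nonneg) simp
    then have "(LINT t:{0..x}|lborel. cmod (h t)) \<le> (LINT t:{0..b}|lborel. cmod (h t))"
      using set_integral_combine_atLeastAtMost[OF norm_h, of x] x by simp
    then show ?thesis
      using \<open>0 \<le> M\<close> by (simp add: mult_left_mono)
  qed
  finally show ?thesis .
qed

lemma has_weak_deriv_imp_continuous_on:
  assumes "has_weak_deriv y g"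
  shows "continuous_on {0..pi} y"
proof -
  have g: "set_integrable lborel {0..pi} g" and y: "\<And>x. x \<in> {0..pi} \<Longrightarrow> y x = y 0 + indef_int g x"
    using assms unfolding has_weak_deriv_def by blast+
  have "continuous_on {0..pi} (\<lambda>x. y 0 + indef_int g x)"
    by (intro continuous_on_add continuous_on_const continuous_on_indef_int[OF g])
  then show ?thesis
    by (rule continuous_on_eq) (rule y[symmetric])
qed

lemma has_weak_deriv_cong:
  assumes "has_weak_deriv y g" "\<And>x. x \<in> {0..pi} \<Longrightarrow> y x = y' x" "\<And>t. t \<in> {0..pi} \<Longrightarrow> g t = g' t"
  shows "has_weak_deriv y' g'"
proof -
  have "indef_int g x = indef_int g' x" if "x \<in> {0..pi}" for x
    by (rule set_lebesgue_integral_cong) (use assms(3) that in auto)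
  moreover have "set_integrable lborel {0..pi} g'"
    using assms(1) set_integrable_cong[of lborel lborel "{0..pi}" "{0..pi}" g g'] assms(3)
    unfolding has_weak_deriv_def by blast
  ultimately show ?thesis
    using assms(1,2) pi_ge_zero unfolding has_weak_deriv_def by (metis atLeastAtMost_iff order_refl)
qed

lemma has_weak_deriv_lincomb:
  assumes y: "has_weak_deriv y g" and z: "has_weak_deriv z k"
  shows "has_weak_deriv (\<lambda>x. a * y x + b * z x) (\<lambda>t. a * g t + b * k t)"
  unfolding has_weak_deriv_def
proof (intro conjI ballI)
  have g: "set_integrable lborel {0..pi} g" and k: "set_integrable lborel {0..pi} k"
    using y z unfolding has_weak_deriv_def by blast+
  then show "set_integrable lborel {0..pi} (\<lambda>t. a * g t + b * k t)"
    by simp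
  fix x assume x: "x \<in> {0..pi}"
  have "set_integrable lborel {0..x} g" "set_integrable lborel {0..x} k"
    using x by (auto intro: set_integrable_subset[OF g] set_integrable_subset[OF k])
  then have "indef_int (\<lambda>t. a * g t + b * k t) x = a * indef_int g x + b * indef_int k x"
    by simp
  moreover have "y x = y 0 + indef_int g x" "z x = z 0 + indef_int k x"
    using y z x unfolding has_weak_deriv_def by blast+
  ultimately show "a * y x + b * z x = (a * y 0 + b * z 0) + indef_int (\<lambda>t. a * g t + b * k t) x"
    by (simp add: algebra_simps)
qed

lemma has_weak_deriv_mult:
  assumes F: "has_weak_deriv F g" and G: "has_weak_deriv G h"
  shows "has_weak_deriv (\<lambda>x. F x * G x) (\<lambda>t. g t * G t + F t * h t)"
  unfolding has_weak_deriv_def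
proof (intro conjI ballI)
  have g: "set_integrable lborel {0..pi} g" and h: "set_integrable lborel {0..pi} h"
    using F G unfolding has_weak_deriv_def by blast+
  have F_eq: "F t = F 0 + indef_int g t" and G_eq: "G t = G 0 + indef_int h t" if "t \<in> {0..pi}" for t
    using F G that unfolding has_weak_deriv_def by blast+
  have gG: "set_integrable lborel {0..pi} (\<lambda>t. g t * G t)"
    using set_integrable_continuous_mult[OF has_weak_deriv_imp_continuous_on[OF G] g]
    by (simp add: mult.commute)
  have Fh: "set_integrable lborel {0..pi} (\<lambda>t. F t * h t)"
    by (rule set_integrable_continuous_mult[OF has_weak_deriv_imp_continuous_on[OF F] h])
  then show "set_integrable lborel {0..pi} (\<lambda>t. g t * G t + F t * h t)"
    using gG by simp
  fix x assume x: "x \<in> {0..pi}"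
  have on_x: "set_integrable lborel {0..x} f" if "set_integrable lborel {0..pi} f" for f :: "real \<Rightarrow> complex"
    by (rule set_integrable_subset[OF that]) (use x in auto)
  have g_Ih: "set_integrable lborel {0..x} (\<lambda>t. g t * indef_int h t)"
    using set_integrable_continuous_mult[OF continuous_on_indef_int[OF on_x[OF h]] on_x[OF g]]
    by (simp add: mult.commute)
  have Ig_h: "set_integrable lborel {0..x} (\<lambda>t. indef_int g t * h t)"
    by (rule set_integrable_continuous_mult[OF continuous_on_indef_int[OF on_x[OF g]] on_x[OF h]])
  have "indef_int (\<lambda>t. g t * G t + F t * h t) x
      = indef_int (\<lambda>t. (G 0 * g t + F 0 * h t) + (g t * indef_int h t + indef_int g t * h t)) x"
  proof (rule set_lebesgue_integral_cong, simp, intro allI impI)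
    fix t assume "t \<in> {0..x}"
    then have "t \<in> {0..pi}" using x by auto
    from F_eq[OF this] G_eq[OF this]
    show "g t * G t + F t * h t = (G 0 * g t + F 0 * h t) + (g t * indef_int h t + indef_int g t * h t)"
      by (simp add: algebra_simps)
  qed
  also have "\<dots> = G 0 * indef_int g x + F 0 * indef_int h x + indef_int g x * indef_int h x"
    using on_x[OF g] on_x[OF h] g_Ih Ig_h x
    by (simp add: indef_int_mult[OF on_x[OF g] on_x[OF h]])
  finally show "F x * G x = F 0 * G 0 + indef_int (\<lambda>t. g t * G t + F t * h t) x"
    using F_eq[OF x] G_eq[OF x] by (simp add: algebra_simps)
qed

lemma has_weak_deriv_zero_imp_const:
  assumes "has_weak_deriv y g" "\<And>t. t \<in> {0..pi} \<Longrightarrow> g t = 0" "x \<in> {0..pi}"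
  shows "y x = y 0"
proof -
  have "indef_int g x = indef_int (\<lambda>_. 0 :: complex) x"
    by (rule set_lebesgue_integral_cong) (use assms(2,3) in auto)
  moreover have "y x = y 0 + indef_int g x"
    using assms(1,3) unfolding has_weak_deriv_def by blast
  ultimately show ?thesis by simp
qed

lemma has_weak_deriv_indef_int:
  assumes "set_integrable lborel {0..pi} g"
  shows "has_weak_deriv (indef_int g) g"
  using assms unfolding has_weak_deriv_def indef_int_0 by simp

lemma L2_norm_sq: "(L2_norm S h)\<^sup>2 = set_lebesgue_integral lborel S (\<lambda>t. (cmod (h t))\<^sup>2)"
proof -
  have "0 \<le> set_lebesgue_integral lborel S (\<lambda>t. (cmod (h t))\<^sup>2)"
    unfolding set_lebesgue_integral_def by (rule Bochner_Integration.integral_nonneg) simp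
  then show ?thesis by (simp add: L2_norm_def)
qed

lemma L2_norm_nonneg: "0 \<le> L2_norm S h"
  unfolding L2_norm_def set_lebesgue_integral_def by (rule real_sqrt_ge_zero, rule Bochner_Integration.integral_nonneg) simp

lemma set_borel_measurable_norm_sq:
  fixes h :: "real \<Rightarrow> complex"
  assumes "set_borel_measurable lborel S h"
  shows "set_borel_measurable lborel S (\<lambda>t. (cmod (h t))\<^sup>2)"
proof -
  have "(\<lambda>x. (cmod (indicator S x *\<^sub>R h x))\<^sup>2) \<in> borel_measurable lborel"
    using assms unfolding set_borel_measurable_def by measurable
  then show ?thesis
    unfolding set_borel_measurable_def by (rule measurable_cong[THEN iffD1, rotated]) (auto simp: indicator_def)
qed

lemma L2_on_dominated:
  fixes h :: "real \<Rightarrow> complex"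
  assumes h: "set_borel_measurable lborel S h" and k: "set_integrable lborel S k"
    and le: "\<And>t. t \<in> S \<Longrightarrow> (cmod (h t))\<^sup>2 \<le> k t"
  shows "L2_on S h" "(L2_norm S h)\<^sup>2 \<le> set_lebesgue_integral lborel S k"
proof -
  have sq: "set_integrable lborel S (\<lambda>t. (cmod (h t))\<^sup>2)"
    by (rule set_integrable_bound[OF k set_borel_measurable_norm_sq[OF h]])
       (auto intro!: AE_I2 intro: order_trans[OF le abs_ge_self])
  then show "L2_on S h"
    using h by (simp add: L2_on_def)
  show "(L2_norm S h)\<^sup>2 \<le> set_lebesgue_integral lborel S k"
    unfolding L2_norm_sq by (rule set_integral_mono[OF sq k le])
qed

lemma L2_on_imp_set_integrable:
  fixes h :: "real \<Rightarrow> complex"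
  assumes "L2_on {a..b} h"
  shows "set_integrable lborel {a..b} h"
proof (rule set_integrable_bound)
  show "set_integrable lborel {a..b} (\<lambda>t. 1 + (cmod (h t))\<^sup>2)"
    using assms by (intro set_integral_add(1)[OF borel_integrable_atLeastAtMost']) (auto simp: L2_on_def)
  show "set_borel_measurable lborel {a..b} h"
    using assms by (simp add: L2_on_def)
  have "cmod (h t) \<le> 1 + (cmod (h t))\<^sup>2" for t
  proof -
    have "2 * cmod (h t) \<le> 1 + (cmod (h t))\<^sup>2"
      using sum_squares_bound[of 1 "cmod (h t)"] by (simp add: power2_eq_square)
    then show ?thesis
      using norm_ge_zero[of "h t"] by linarith
  qed
  then show "AE t in lborel. t \<in> {a..b} \<longrightarrow> norm (h t) \<le> norm (1 + (cmod (h t))\<^sup>2)"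
    by (intro AE_I2) simp
qed

(* Cauchy-Schwarz, via 2 l |f| \<le> l\<^sup>2 + |f|\<^sup>2 with l the mean of |f|. *)
lemma set_integral_norm_le_L2_norm:
  fixes f :: "real \<Rightarrow> complex"
  assumes f: "L2_on {a..b} f" and "a < b"
  shows "(LINT t:{a..b}|lborel. cmod (f t)) \<le> sqrt (b - a) * L2_norm {a..b} f"
proof -
  define A where "A = (LINT t:{a..b}|lborel. cmod (f t))"
  define N where "N = (LINT t:{a..b}|lborel. (cmod (f t))\<^sup>2)"
  define l where "l = A / (b - a)"
  have norm_f: "set_integrable lborel {a..b} (\<lambda>t. cmod (f t))"
    using L2_on_imp_set_integrable[OF f] by (simp add: set_integrable_norm)
  have sq: "set_integrable lborel {a..b} (\<lambda>t. (cmod (f t))\<^sup>2)"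
    using f by (simp add: L2_on_def)
  have const: "set_integrable lborel {a..b} (\<lambda>_. l\<^sup>2)"
    by (rule borel_integrable_atLeastAtMost') simp
  have "2 * l * A = (LINT t:{a..b}|lborel. 2 * l * cmod (f t))"
    by (simp add: A_def)
  also have "\<dots> \<le> (LINT t:{a..b}|lborel. l\<^sup>2 + (cmod (f t))\<^sup>2)"
    using norm_f sq const sum_squares_bound[of l]
    by (intro set_integral_mono) (auto simp: power2_eq_square)
  also have "\<dots> = l\<^sup>2 * (b - a) + N"
    using set_integral_add(2)[OF const sq] \<open>a < b\<close> by (simp add: N_def set_integral_const)
  finally have "2 * l * A \<le> l\<^sup>2 * (b - a) + N" .
  moreover have "l\<^sup>2 * (b - a) = l * A"
    using \<open>a < b\<close> by (simp add: l_def power2_eq_square)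
  ultimately have "A * A / (b - a) \<le> N"
    by (simp add: l_def)
  then have "A\<^sup>2 \<le> (b - a) * N"
    using \<open>a < b\<close> by (simp add: pos_divide_le_eq power2_eq_square mult.commute)
  moreover have "0 \<le> A"
    unfolding A_def set_lebesgue_integral_def by (rule Bochner_Integration.integral_nonneg) simp
  ultimately show ?thesis
    using real_sqrt_le_mono[of "A\<^sup>2" "(b - a) * N"]
    by (simp add: A_def N_def L2_norm_def real_sqrt_mult)
qed

lemma L2_on_bounded_continuous:
  fixes F :: "real \<Rightarrow> complex"
  assumes F: "continuous_on {a..b} F" and S: "\<And>t. t \<in> {a..b} \<Longrightarrow> cmod (F t) \<le> S" and "a \<le> b"
  shows "L2_on {a..b} F" "(L2_norm {a..b} F)\<^sup>2 \<le> (b - a) * S\<^sup>2"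
proof -
  have "(cmod (F t))\<^sup>2 \<le> S\<^sup>2" if "t \<in> {a..b}" for t
    using S[OF that] by (simp add: power_mono)
  note dom = L2_on_dominated[OF set_borel_measurable_continuous_on[OF F]
      borel_integrable_atLeastAtMost'[of a b "\<lambda>_. S\<^sup>2"] this]
  then show "L2_on {a..b} F" by simp
  show "(L2_norm {a..b} F)\<^sup>2 \<le> (b - a) * S\<^sup>2"
    using dom(2) \<open>a \<le> b\<close> by (simp add: set_integral_const)
qed

lemma L2_on_mult_add_bounded_continuous:
  fixes Q F G :: "real \<Rightarrow> complex"
  assumes Q: "L2_on {a..b} Q" and F: "continuous_on {a..b} F" and G: "continuous_on {a..b} G"
    and FS: "\<And>t. t \<in> {a..b} \<Longrightarrow> cmod (F t) \<le> S" and GS: "\<And>t. t \<in> {a..b} \<Longrightarrow> cmod (G t) \<le> S"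
    and "a \<le> b"
  shows "L2_on {a..b} (\<lambda>t. Q t * F t + G t)"
    "(L2_norm {a..b} (\<lambda>t. Q t * F t + G t))\<^sup>2
       \<le> 2 * S\<^sup>2 * (LINT t:{a..b}|lborel. (cmod (Q t))\<^sup>2) + 2 * (b - a) * S\<^sup>2"
proof -
  have le: "(cmod (Q t * F t + G t))\<^sup>2 \<le> 2 * S\<^sup>2 * (cmod (Q t))\<^sup>2 + 2 * S\<^sup>2" if "t \<in> {a..b}" for t
  proof -
    have "cmod (Q t * F t + G t) \<le> cmod (Q t) * S + S"
      using norm_triangle_ineq[of "Q t * F t" "G t"] GS[OF that]
        mult_left_mono[OF FS[OF that] norm_ge_zero[of "Q t"]]
      by (simp add: norm_mult)
    then have "(cmod (Q t * F t + G t))\<^sup>2 \<le> (cmod (Q t) * S + S)\<^sup>2"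
      by (simp add: power_mono)
    also have "\<dots> \<le> 2 * S\<^sup>2 * (cmod (Q t))\<^sup>2 + 2 * S\<^sup>2"
      using sum_squares_bound[of "cmod (Q t) * S" S] by (simp add: power2_eq_square algebra_simps)
    finally show ?thesis .
  qed
  have meas: "set_borel_measurable lborel {a..b} (\<lambda>t. Q t * F t + G t)"
    using Q by (intro set_borel_measurable_add set_borel_measurable_mult
        set_borel_measurable_continuous_on[OF F] set_borel_measurable_continuous_on[OF G])
      (simp add: L2_on_def)
  have QS: "set_integrable lborel {a..b} (\<lambda>t. 2 * S\<^sup>2 * (cmod (Q t))\<^sup>2)"
    using Q by (simp add: L2_on_def)
  have S: "set_integrable lborel {a..b} (\<lambda>_. 2 * S\<^sup>2)"
    by (rule borel_integrable_atLeastAtMost') simp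
  note dom = L2_on_dominated[OF meas set_integral_add(1)[OF QS S] le]
  then show "L2_on {a..b} (\<lambda>t. Q t * F t + G t)" by simp
  show "(L2_norm {a..b} (\<lambda>t. Q t * F t + G t))\<^sup>2
      \<le> 2 * S\<^sup>2 * (LINT t:{a..b}|lborel. (cmod (Q t))\<^sup>2) + 2 * (b - a) * S\<^sup>2"
    using dom(2) set_integral_add(2)[OF QS S] \<open>a \<le> b\<close> by (simp add: set_integral_const algebra_simps)
qed

lemma sol_sys_lincomb:
  assumes "sol_sys C Q f y u" "sol_sys C Q h z w"
  shows "sol_sys C Q (\<lambda>t. a * f t + b * h t) (\<lambda>x. a * y x + b * z x) (\<lambda>x. a * u x + b * w x)"
  unfolding sol_sys_def
proof
  show "has_weak_deriv (\<lambda>x. a * y x + b * z x) (\<lambda>t. Q t * (a * y t + b * z t) + (a * u t + b * w t))"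
    by (rule has_weak_deriv_cong[OF has_weak_deriv_lincomb])
       (use assms in \<open>auto simp: sol_sys_def algebra_simps\<close>)
  show "has_weak_deriv (\<lambda>x. a * u x + b * w x)
      (\<lambda>t. (C - (Q t)\<^sup>2) * (a * y t + b * z t) - Q t * (a * u t + b * w t) + (a * f t + b * h t))"
    by (rule has_weak_deriv_cong[OF has_weak_deriv_lincomb])
       (use assms in \<open>auto simp: sol_sys_def algebra_simps\<close>)
qed

lemma sol_sys_wronskian_const:
  assumes s1: "sol_sys C Q (\<lambda>_. 0) y1 u1" and s2: "sol_sys C Q (\<lambda>_. 0) y2 u2" and x: "x \<in> {0..pi}"
  shows "y1 x * u2 x - y2 x * u1 x = y1 0 * u2 0 - y2 0 * u1 0"
proof -
  have "has_weak_deriv (\<lambda>x. 1 * (y1 x * u2 x) + (-1) * (y2 x * u1 x))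
     (\<lambda>t. 1 * ((Q t * y1 t + u1 t) * u2 t + y1 t * ((C - (Q t)\<^sup>2) * y2 t - Q t * u2 t + 0))
        + (-1) * ((Q t * y2 t + u2 t) * u1 t + y2 t * ((C - (Q t)\<^sup>2) * y1 t - Q t * u1 t + 0)))"
    using s1 s2 unfolding sol_sys_def by (intro has_weak_deriv_lincomb has_weak_deriv_mult) auto
  from has_weak_deriv_zero_imp_const[OF this _ x] show ?thesis
    by (simp add: algebra_simps)
qed

locale fundamental_system =
  fixes C :: complex and Q y1 u1 y2 u2 :: "real \<Rightarrow> complex"
  assumes sol1: "sol_sys C Q (\<lambda>_. 0) y1 u1" and init1: "y1 0 = 1" "u1 0 = 0"
    and sol2: "sol_sys C Q (\<lambda>_. 0) y2 u2" and init2: "y2 0 = 0" "u2 0 = 1"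
begin

lemma wronskian: "x \<in> {0..pi} \<Longrightarrow> y1 x * u2 x - y2 x * u1 x = 1"
  using sol_sys_wronskian_const[OF sol1 sol2] init1 init2 by simp

lemma homogeneous_solution_eq:
  assumes sol: "sol_sys C Q (\<lambda>_. 0) y u" and "y 0 = 0" and x: "x \<in> {0..pi}"
  shows "y x = u 0 * y2 x" "u x = u 0 * u2 x"
proof -
  have w1: "y x * u1 x - y1 x * u x = - u 0"
    using sol_sys_wronskian_const[OF sol sol1 x] \<open>y 0 = 0\<close> init1 by simp
  have w2: "y x * u2 x - y2 x * u x = 0"
    using sol_sys_wronskian_const[OF sol sol2 x] \<open>y 0 = 0\<close> init2 by simp
  have "y x = y x * (y1 x * u2 x - y2 x * u1 x)" by (simp add: wronskian[OF x])
  also have "\<dots> = y1 x * (y x * u2 x - y2 x * u x) - y2 x * (y x * u1 x - y1 x * u x)"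
    by (simp add: algebra_simps)
  finally show "y x = u 0 * y2 x" by (simp add: w1 w2)
  have "u x = u x * (y1 x * u2 x - y2 x * u1 x)" by (simp add: wronskian[OF x])
  also have "\<dots> = u1 x * (y x * u2 x - y2 x * u x) - u2 x * (y x * u1 x - y1 x * u x)"
    by (simp add: algebra_simps)
  finally show "u x = u 0 * u2 x" by (simp add: w1 w2)
qed

lemma fundamental_system_bounded:
  obtains M where "\<And>x. x \<in> {0..pi} \<Longrightarrow>
    cmod (y1 x) \<le> M \<and> cmod (u1 x) \<le> M \<and> cmod (y2 x) \<le> M \<and> cmod (u2 x) \<le> M"
proof -
  have "continuous_on {0..pi} y1" "continuous_on {0..pi} u1" "continuous_on {0..pi} y2" "continuous_on {0..pi} u2"
    using sol1 sol2 unfolding sol_sys_def by (auto intro: has_weak_deriv_imp_continuous_on)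
  then have "continuous_on {0..pi} (\<lambda>x. cmod (y1 x) + cmod (u1 x) + cmod (y2 x) + cmod (u2 x))"
    by (intro continuous_intros)
  from continuous_on_bounded_norm[OF this] obtain M
    where M: "\<And>x. x \<in> {0..pi} \<Longrightarrow> norm (cmod (y1 x) + cmod (u1 x) + cmod (y2 x) + cmod (u2 x)) \<le> M"
    by blast
  show ?thesis
  proof (rule that)
    fix x assume "x \<in> {0..pi}"
    with M have "cmod (y1 x) + cmod (u1 x) + cmod (y2 x) + cmod (u2 x) \<le> M"
      by (simp add: abs_le_iff)
    then show "cmod (y1 x) \<le> M \<and> cmod (u1 x) \<le> M \<and> cmod (y2 x) \<le> M \<and> cmod (u2 x) \<le> M"
      using norm_ge_zero[of "y1 x"] norm_ge_zero[of "u1 x"] norm_ge_zero[of "y2 x"] norm_ge_zero[of "u2 x"]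
      by linarith
  qed
qed

definition yp :: "(real \<Rightarrow> complex) \<Rightarrow> real \<Rightarrow> complex" where
  "yp f x = y2 x * indef_int (\<lambda>t. y1 t * f t) x - y1 x * indef_int (\<lambda>t. y2 t * f t) x"

definition up :: "(real \<Rightarrow> complex) \<Rightarrow> real \<Rightarrow> complex" where
  "up f x = u2 x * indef_int (\<lambda>t. y1 t * f t) x - u1 x * indef_int (\<lambda>t. y2 t * f t) x"

lemma yp_0: "yp f 0 = 0"
  unfolding yp_def indef_int_0 init2 by simp

lemma sol_sys_particular:
  assumes f: "set_integrable lborel {0..pi} f"
  shows "sol_sys C Q f (yp f) (up f)"
proof -
  let ?I1 = "indef_int (\<lambda>t. y1 t * f t)" and ?I2 = "indef_int (\<lambda>t. y2 t * f t)"
  have y1: "has_weak_deriv y1 (\<lambda>t. Q t * y1 t + u1 t)"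
    and u1: "has_weak_deriv u1 (\<lambda>t. (C - (Q t)\<^sup>2) * y1 t - Q t * u1 t + 0)"
    and y2: "has_weak_deriv y2 (\<lambda>t. Q t * y2 t + u2 t)"
    and u2: "has_weak_deriv u2 (\<lambda>t. (C - (Q t)\<^sup>2) * y2 t - Q t * u2 t + 0)"
    using sol1 sol2 unfolding sol_sys_def by blast+
  have I1: "has_weak_deriv ?I1 (\<lambda>t. y1 t * f t)" and I2: "has_weak_deriv ?I2 (\<lambda>t. y2 t * f t)"
    using y1 y2 f by (auto intro!: has_weak_deriv_indef_int set_integrable_continuous_mult
        has_weak_deriv_imp_continuous_on)
  show ?thesis
    unfolding sol_sys_def yp_def up_def
  proof
    show "has_weak_deriv (\<lambda>x. y2 x * ?I1 x - y1 x * ?I2 x)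
        (\<lambda>t. Q t * (y2 t * ?I1 t - y1 t * ?I2 t) + (u2 t * ?I1 t - u1 t * ?I2 t))"
      by (rule has_weak_deriv_cong[OF has_weak_deriv_lincomb[OF has_weak_deriv_mult[OF y2 I1]
            has_weak_deriv_mult[OF y1 I2], of 1 "-1"]])
        (simp_all add: algebra_simps)
    have "has_weak_deriv (\<lambda>x. 1 * (u2 x * ?I1 x) + (-1) * (u1 x * ?I2 x))
        (\<lambda>t. (C - (Q t)\<^sup>2) * (y2 t * ?I1 t - y1 t * ?I2 t) - Q t * (u2 t * ?I1 t - u1 t * ?I2 t)
           + (y1 t * u2 t - y2 t * u1 t) * f t)"
      by (rule has_weak_deriv_cong[OF has_weak_deriv_lincomb[OF has_weak_deriv_mult[OF u2 I1]
            has_weak_deriv_mult[OF u1 I2], of 1 "-1"]])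
        (simp_all add: algebra_simps)
    then show "has_weak_deriv (\<lambda>x. u2 x * ?I1 x - u1 x * ?I2 x)
        (\<lambda>t. (C - (Q t)\<^sup>2) * (y2 t * ?I1 t - y1 t * ?I2 t) - Q t * (u2 t * ?I1 t - u1 t * ?I2 t) + f t)"
      by (rule has_weak_deriv_cong) (simp_all add: wronskian)
  qed
qed

lemma particular_bound:
  assumes M: "\<And>x. x \<in> {0..pi} \<Longrightarrow>
      cmod (y1 x) \<le> M \<and> cmod (u1 x) \<le> M \<and> cmod (y2 x) \<le> M \<and> cmod (u2 x) \<le> M"
    and f: "set_integrable lborel {0..pi} f" and x: "x \<in> {0..pi}"
  shows "cmod (yp f x) \<le> 2 * M\<^sup>2 * (LINT t:{0..pi}|lborel. cmod (f t))"
    and "cmod (up f x) \<le> 2 * M\<^sup>2 * (LINT t:{0..pi}|lborel. cmod (f t))"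
proof -
  let ?A = "LINT t:{0..pi}|lborel. cmod (f t)"
  have cont: "continuous_on {0..pi} y1" "continuous_on {0..pi} y2"
    using sol1 sol2 unfolding sol_sys_def by (auto intro: has_weak_deriv_imp_continuous_on)
  have I1: "cmod (indef_int (\<lambda>t. y1 t * f t) x) \<le> M * ?A"
    and I2: "cmod (indef_int (\<lambda>t. y2 t * f t) x) \<le> M * ?A"
    using M x by (auto intro!: norm_indef_int_mult_le[OF f] cont)
  have "cmod (a * indef_int (\<lambda>t. y1 t * f t) x - b * indef_int (\<lambda>t. y2 t * f t) x) \<le> 2 * M\<^sup>2 * ?A"
    if "cmod a \<le> M" "cmod b \<le> M" for a b
  proof -
    have "cmod (a * indef_int (\<lambda>t. y1 t * f t) x - b * indef_int (\<lambda>t. y2 t * f t) x)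
        \<le> cmod a * cmod (indef_int (\<lambda>t. y1 t * f t) x) + cmod b * cmod (indef_int (\<lambda>t. y2 t * f t) x)"
      using norm_triangle_ineq4[of "a * indef_int (\<lambda>t. y1 t * f t) x" "b * indef_int (\<lambda>t. y2 t * f t) x"]
      by (simp add: norm_mult)
    also have "\<dots> \<le> M * (M * ?A) + M * (M * ?A)"
      using that I1 I2 by (intro add_mono mult_mono) (auto intro: order_trans[OF norm_ge_zero])
    finally show ?thesis by (simp add: power2_eq_square)
  qed
  then show "cmod (yp f x) \<le> 2 * M\<^sup>2 * ?A" "cmod (up f x) \<le> 2 * M\<^sup>2 * ?A"
    using M[OF x] unfolding yp_def up_def by auto
qed

end

locale dirichlet_system = fundamental_system +
  assumes y2_pi: "y2 pi \<noteq> 0"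
begin

definition R1 :: "(real \<Rightarrow> complex) \<Rightarrow> real \<Rightarrow> complex" where
  "R1 f x = yp f x - yp f pi / y2 pi * y2 x"

definition R2 :: "(real \<Rightarrow> complex) \<Rightarrow> real \<Rightarrow> complex" where
  "R2 f x = up f x - yp f pi / y2 pi * u2 x"

lemma sol_sys_R:
  assumes "set_integrable lborel {0..pi} f"
  shows "sol_sys C Q f (R1 f) (R2 f)"
  using sol_sys_lincomb[OF sol_sys_particular[OF assms] sol2, of 1 "- yp f pi / y2 pi"]
  unfolding R1_def[abs_def] R2_def[abs_def] by simp

lemma R1_0: "R1 f 0 = 0"
  by (simp add: R1_def yp_0 init2)

lemma R1_pi: "R1 f pi = 0"
  using y2_pi by (simp add: R1_def)

lemma dirichlet_solution_unique:
  assumes "sol_sys C Q f y u" "y 0 = 0" "y pi = 0"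
    and "sol_sys C Q f z w" "z 0 = 0" "z pi = 0" and x: "x \<in> {0..pi}"
  shows "y x = z x \<and> u x = w x"
proof -
  have diff: "sol_sys C Q (\<lambda>_. 0) (\<lambda>x. y x - z x) (\<lambda>x. u x - w x)"
    using sol_sys_lincomb[OF assms(1,4), of 1 "-1"] by simp
  have "y pi - z pi = (u 0 - w 0) * y2 pi"
    using homogeneous_solution_eq(1)[OF diff, of pi] assms(2,5) by simp
  then have "u 0 - w 0 = 0"
    using assms(3,6) y2_pi by simp
  then show ?thesis
    using homogeneous_solution_eq[OF diff _ x] assms(2,5) by simp
qed

lemma dirichlet_problem_R:
  assumes f: "set_integrable lborel {0..pi} f"
  shows "sol_sys C Q f (R1 f) (R2 f) \<and> R1 f 0 = 0 \<and> R1 f pi = 0 \<and>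
    (\<forall>y u. sol_sys C Q f y u \<and> y 0 = 0 \<and> y pi = 0 \<longrightarrow> (\<forall>x\<in>{0..pi}. y x = R1 f x \<and> u x = R2 f x))"
proof -
  have "\<forall>y u. sol_sys C Q f y u \<and> y 0 = 0 \<and> y pi = 0 \<longrightarrow> (\<forall>x\<in>{0..pi}. y x = R1 f x \<and> u x = R2 f x)"
    using dirichlet_solution_unique[OF _ _ _ sol_sys_R[OF f] R1_0 R1_pi] by blast
  then show ?thesis
    using sol_sys_R[OF f] R1_0 R1_pi by simp
qed

lemma R_lincomb:
  assumes f: "set_integrable lborel {0..pi} f" and g: "set_integrable lborel {0..pi} g" and x: "x \<in> {0..pi}"
  shows "R1 (\<lambda>t. a * f t + b * g t) x = a * R1 f x + b * R1 g x \<and>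
         R2 (\<lambda>t. a * f t + b * g t) x = a * R2 f x + b * R2 g x"
proof -
  have "set_integrable lborel {0..pi} (\<lambda>t. a * f t + b * g t)"
    using f g by simp
  from dirichlet_solution_unique[OF sol_sys_R[OF this] R1_0 R1_pi
      sol_sys_lincomb[OF sol_sys_R[OF f] sol_sys_R[OF g]] _ _ x]
  show ?thesis
    by (simp add: R1_0 R1_pi)
qed

lemma R_bound:
  obtains K where "0 \<le> K" and "\<And>f x. set_integrable lborel {0..pi} f \<Longrightarrow> x \<in> {0..pi} \<Longrightarrow>
    cmod (R1 f x) \<le> K * (LINT t:{0..pi}|lborel. cmod (f t)) \<and>
    cmod (R2 f x) \<le> K * (LINT t:{0..pi}|lborel. cmod (f t))"
proof -
  obtain M where M: "\<And>x. x \<in> {0..pi} \<Longrightarrow>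
      cmod (y1 x) \<le> M \<and> cmod (u1 x) \<le> M \<and> cmod (y2 x) \<le> M \<and> cmod (u2 x) \<le> M"
    using fundamental_system_bounded by blast
  have "0 \<le> M"
    using M[of 0] by (auto intro: order_trans[OF norm_ge_zero])
  define c where "c = cmod (y2 pi)"
  have "0 < c"
    using y2_pi by (simp add: c_def)
  show ?thesis
  proof (rule that)
    show "0 \<le> 2 * M\<^sup>2 + 2 * M\<^sup>2 / c * M"
      using \<open>0 \<le> M\<close> \<open>0 < c\<close> by simp
    fix f :: "real \<Rightarrow> complex" and x assume f: "set_integrable lborel {0..pi} f" and x: "x \<in> {0..pi}"
    define A where "A = (LINT t:{0..pi}|lborel. cmod (f t))"
    have yp_pi: "cmod (yp f pi / y2 pi) \<le> 2 * M\<^sup>2 * A / c"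
      using particular_bound(1)[OF M f, of pi] \<open>0 < c\<close>
      by (simp add: A_def c_def norm_divide divide_right_mono)
    have "cmod (p - yp f pi / y2 pi * q) \<le> (2 * M\<^sup>2 + 2 * M\<^sup>2 / c * M) * A"
      if "cmod p \<le> 2 * M\<^sup>2 * A" "cmod q \<le> M" for p q
    proof -
      have "cmod (p - yp f pi / y2 pi * q) \<le> cmod p + cmod (yp f pi / y2 pi) * cmod q"
        using norm_triangle_ineq4[of p "yp f pi / y2 pi * q"] by (simp only: norm_mult)
      also have "\<dots> \<le> 2 * M\<^sup>2 * A + 2 * M\<^sup>2 * A / c * M"
        using that yp_pi by (intro add_mono mult_mono) (auto intro: order_trans[OF norm_ge_zero])
      finally show ?thesis
        by (simp add: algebra_simps)
    qed
    then show "cmod (R1 f x) \<le> (2 * M\<^sup>2 + 2 * M\<^sup>2 / c * M) * A \<and> cmod (R2 f x) \<le> (2 * M\<^sup>2 + 2 * M\<^sup>2 / c * M) * A"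
      unfolding R1_def R2_def using particular_bound[OF M f x] M[OF x] by (simp add: A_def)
  qed
qed

lemma continuous_on_R:
  assumes "set_integrable lborel {0..pi} f"
  shows "continuous_on {0..pi} (R1 f)" "continuous_on {0..pi} (R2 f)"
  using sol_sys_R[OF assms] unfolding sol_sys_def by (auto intro: has_weak_deriv_imp_continuous_on)

lemma R_L2_pointwise_bound:
  obtains K where "0 \<le> K" and "\<And>f x. L2_on {0..pi} f \<Longrightarrow> x \<in> {0..pi} \<Longrightarrow>
    cmod (R1 f x) \<le> K * L2_norm {0..pi} f \<and> cmod (R2 f x) \<le> K * L2_norm {0..pi} f"
proof -
  obtain K where K: "0 \<le> K" "\<And>f x. set_integrable lborel {0..pi} f \<Longrightarrow> x \<in> {0..pi} \<Longrightarrow>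
      cmod (R1 f x) \<le> K * (LINT t:{0..pi}|lborel. cmod (f t)) \<and>
      cmod (R2 f x) \<le> K * (LINT t:{0..pi}|lborel. cmod (f t))"
    using R_bound by blast
  show ?thesis
  proof (rule that)
    show "0 \<le> K * sqrt pi"
      using K(1) by simp
    fix f :: "real \<Rightarrow> complex" and x assume f: "L2_on {0..pi} f" and x: "x \<in> {0..pi}"
    have "K * (LINT t:{0..pi}|lborel. cmod (f t)) \<le> K * sqrt pi * L2_norm {0..pi} f"
      using mult_left_mono[OF set_integral_norm_le_L2_norm[OF f pi_gt_zero] K(1)] by (simp add: mult.assoc)
    then show "cmod (R1 f x) \<le> K * sqrt pi * L2_norm {0..pi} f \<and> cmod (R2 f x) \<le> K * sqrt pi * L2_norm {0..pi} f"
      using K(2)[OF L2_on_imp_set_integrable[OF f] x] by linarith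
  qed
qed

lemma R2_L2_bound:
  "\<exists>K. \<forall>f. L2_on {0..pi} f \<longrightarrow> L2_on {0..pi} (R2 f) \<and> L2_norm {0..pi} (R2 f) \<le> K * L2_norm {0..pi} f"
proof -
  obtain K where K: "0 \<le> K" "\<And>f x. L2_on {0..pi} f \<Longrightarrow> x \<in> {0..pi} \<Longrightarrow>
      cmod (R1 f x) \<le> K * L2_norm {0..pi} f \<and> cmod (R2 f x) \<le> K * L2_norm {0..pi} f"
    using R_L2_pointwise_bound by blast
  show ?thesis
  proof (rule exI[of _ "sqrt pi * K"], intro allI impI)
    fix f assume f: "L2_on {0..pi} f"
    note R2 = L2_on_bounded_continuous[OF continuous_on_R(2)[OF L2_on_imp_set_integrable[OF f]]
        conjunct2[OF K(2)[OF f]] pi_ge_zero]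
    have "(L2_norm {0..pi} (R2 f))\<^sup>2 \<le> (sqrt pi * K * L2_norm {0..pi} f)\<^sup>2"
      using R2(2) by (simp add: power_mult_distrib)
    then have "L2_norm {0..pi} (R2 f) \<le> sqrt pi * K * L2_norm {0..pi} f"
      by (rule power2_le_imp_le) (use K(1) L2_norm_nonneg[of "{0..pi}" f] in simp)
    with R2(1) show "L2_on {0..pi} (R2 f) \<and> L2_norm {0..pi} (R2 f) \<le> (sqrt pi * K) * L2_norm {0..pi} f"
      by simp
  qed
qed

lemma R1_H1_bound:
  assumes Q: "L2_on {0..pi} Q"
  shows "\<exists>K. \<forall>f. L2_on {0..pi} f \<longrightarrow> (\<exists>g. L2_on {0..pi} g \<and> has_weak_deriv (R1 f) g \<and>
    sqrt ((L2_norm {0..pi} (R1 f))\<^sup>2 + (L2_norm {0..pi} g)\<^sup>2) \<le> K * L2_norm {0..pi} f)"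
proof -
  obtain K where K: "0 \<le> K" "\<And>f x. L2_on {0..pi} f \<Longrightarrow> x \<in> {0..pi} \<Longrightarrow>
      cmod (R1 f x) \<le> K * L2_norm {0..pi} f \<and> cmod (R2 f x) \<le> K * L2_norm {0..pi} f"
    using R_L2_pointwise_bound by blast
  define q where "q = (LINT t:{0..pi}|lborel. (cmod (Q t))\<^sup>2)"
  have "0 \<le> q"
    unfolding q_def set_lebesgue_integral_def by (rule Bochner_Integration.integral_nonneg) simp
  show ?thesis
  proof (rule exI[of _ "sqrt (3 * pi + 2 * q) * K"], intro allI impI)
    fix f assume f: "L2_on {0..pi} f"
    let ?g = "\<lambda>t. Q t * R1 f t + R2 f t"
    have R1S: "\<And>t. t \<in> {0..pi} \<Longrightarrow> cmod (R1 f t) \<le> K * L2_norm {0..pi} f"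
      and R2S: "\<And>t. t \<in> {0..pi} \<Longrightarrow> cmod (R2 f t) \<le> K * L2_norm {0..pi} f"
      using K(2)[OF f] by simp_all
    note cont = continuous_on_R[OF L2_on_imp_set_integrable[OF f]]
    note R1 = L2_on_bounded_continuous[OF cont(1) R1S pi_ge_zero]
    note g = L2_on_mult_add_bounded_continuous[OF Q cont R1S R2S pi_ge_zero]
    have "(L2_norm {0..pi} (R1 f))\<^sup>2 + (L2_norm {0..pi} ?g)\<^sup>2 \<le> (sqrt (3 * pi + 2 * q) * K * L2_norm {0..pi} f)\<^sup>2"
      using R1(2) g(2) \<open>0 \<le> q\<close> by (simp add: q_def power_mult_distrib algebra_simps)
    then have "sqrt ((L2_norm {0..pi} (R1 f))\<^sup>2 + (L2_norm {0..pi} ?g)\<^sup>2) \<le> sqrt (3 * pi + 2 * q) * K * L2_norm {0..pi} f"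
      by (rule real_le_lsqrt[rotated]) (use K(1) L2_norm_nonneg[of "{0..pi}" f] \<open>0 \<le> q\<close> in simp)
    moreover have "has_weak_deriv (R1 f) ?g"
      using sol_sys_R[OF L2_on_imp_set_integrable[OF f]] by (simp add: sol_sys_def)
    ultimately show "\<exists>g. L2_on {0..pi} g \<and> has_weak_deriv (R1 f) g \<and>
        sqrt ((L2_norm {0..pi} (R1 f))\<^sup>2 + (L2_norm {0..pi} g)\<^sup>2) \<le> (sqrt (3 * pi + 2 * q) * K) * L2_norm {0..pi} f"
      using g(1) by (intro exI[of _ ?g]) simp
  qed
qed

lemma regularity_R:
  assumes Q: "L2_on {0..pi} Q" and f: "L2_on {0..pi} f"
  shows "H1 (R1 f) \<and> L2_on {0..pi} (R2 f) \<and> W11 (R2 f)"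
proof (intro conjI)
  show "H1 (R1 f)"
    using R1_H1_bound[OF Q] f unfolding H1_def by blast
  show "L2_on {0..pi} (R2 f)"
    using R2_L2_bound f by blast
  show "W11 (R2 f)"
    using sol_sys_R[OF L2_on_imp_set_integrable[OF f]] unfolding sol_sys_def W11_def has_weak_deriv_def
    by blast
qed

end

theorem lemma5:
  fixes C :: complex and Q y1 u1 y2 u2 :: "real \<Rightarrow> complex"
  assumes Q_loc: "L2_loc Q"
    and Q_per: "\<forall>x. Q (x + pi) = Q x"
    and Q_mean: "set_lebesgue_integral lborel {0..pi} Q / pi = 0"
    and sol1: "sol_sys C Q (\<lambda>_. 0) y1 u1" and init1: "y1 0 = 1" "u1 0 = 0"
    and sol2: "sol_sys C Q (\<lambda>_. 0) y2 u2" and init2: "y2 0 = 0" "u2 0 = 1"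
    and y2pi: "y2 pi \<noteq> 0"
  shows "\<exists>R1 R2 :: (real \<Rightarrow> complex) \<Rightarrow> (real \<Rightarrow> complex).
     (\<forall>f. L2_on {0..pi} f \<longrightarrow>
        sol_sys C Q f (R1 f) (R2 f) \<and> R1 f 0 = 0 \<and> R1 f pi = 0 \<and>
        (\<forall>y u. sol_sys C Q f y u \<and> y 0 = 0 \<and> y pi = 0 \<longrightarrow>
           (\<forall>x\<in>{0..pi}. y x = R1 f x \<and> u x = R2 f x))) \<and>
     (\<forall>f g (a::complex) (b::complex). L2_on {0..pi} f \<longrightarrow> L2_on {0..pi} g \<longrightarrow>
        (\<forall>x\<in>{0..pi}. R1 (\<lambda>t. a * f t + b * g t) x = a * R1 f x + b * R1 g x \<and>
                       R2 (\<lambda>t. a * f t + b * g t) x = a * R2 f x + b * R2 g x)) \<and>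
     (\<forall>f. L2_on {0..pi} f \<longrightarrow> H1 (R1 f) \<and> L2_on {0..pi} (R2 f) \<and> W11 (R2 f)) \<and>
     (\<exists>K. \<forall>f. L2_on {0..pi} f \<longrightarrow>
        (\<exists>g. L2_on {0..pi} g \<and> has_weak_deriv (R1 f) g \<and>
             sqrt ((L2_norm {0..pi} (R1 f))^2 + (L2_norm {0..pi} g)^2) \<le> K * L2_norm {0..pi} f)) \<and>
     (\<exists>K. \<forall>f. L2_on {0..pi} f \<longrightarrow> L2_norm {0..pi} (R2 f) \<le> K * L2_norm {0..pi} f)"
proof -
  interpret dirichlet_system C Q y1 u1 y2 u2
    using sol1 init1 sol2 init2 y2pi by unfold_locales
  have Q: "L2_on {0..pi} Q"
    using Q_loc by (simp add: L2_loc_def)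
  show ?thesis
    apply (rule exI[of _ R1], rule exI[of _ R2], intro conjI)
    subgoal by (intro allI impI dirichlet_problem_R L2_on_imp_set_integrable)
    subgoal by (intro allI impI ballI R_lincomb L2_on_imp_set_integrable)
    subgoal by (intro allI impI regularity_R[OF Q])
    subgoal by (rule R1_H1_bound[OF Q])
    subgoal using R2_L2_bound by blast
    done
qed

end
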